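(* Let $R$ be a Noetherian integral domain containing $\mathbb{F}_q$, with field of fractions $K$, and let $A\in\mathrm{GL}_n(R)$. Then for every solution $X\in K_{\mathrm{sep}}^n$ of the system $AX^{(q)}=X$, the coordinates of $X$ are integral over $R$.
   Context: $K_{\mathrm{sep}}$ is a separable closure of $K$ (all solutions in an algebraic closure lie there); $X^{(q)}$ denotes the vector obtained by raising each coordinate to the $q$-th power; $\mathrm{GL}_n(R)$ is the group of $n\times n$ matrices over $R$ invertible over $R$. *)

theory Defs
  imports "Jordan_Normal_Form.Matrix" "HOL-Computational_Algebra.Polynomial"
begin

text \<open>R is a subring of the field 'a (hence an integral domain).\<close>
definition subring_of :: "'a::field set \<Rightarrow> bool" where
  "subring_of R \<longleftrightarrow> 0 \<in> R \<and> 1 \<in> R \<and>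
     (\<forall>x\<in>R. \<forall>y\<in>R. x + y \<in> R \<and> x - y \<in> R \<and> x * y \<in> R)"

definition ideal_of :: "'a::field set \<Rightarrow> 'a set \<Rightarrow> bool" where
  "ideal_of R I \<longleftrightarrow> I \<subseteq> R \<and> 0 \<in> I \<and>
     (\<forall>x\<in>I. \<forall>y\<in>I. x + y \<in> I) \<and> (\<forall>r\<in>R. \<forall>x\<in>I. r * x \<in> I)"

definition noetherian_subring :: "'a::field set \<Rightarrow> bool" where
  "noetherian_subring R \<longleftrightarrow> subring_of R \<and>
     (\<forall>I. ideal_of R I \<longrightarrow>
        (\<exists>G. finite G \<and> G \<subseteq> I \<and>
             I = {(\<Sum>g\<in>G. c g * g) | c. \<forall>g\<in>G. c g \<in> R}))"

definition contains_Fq :: "'a::field set \<Rightarrow> nat \<Rightarrow> bool" where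
  "contains_Fq R q \<longleftrightarrow> (\<exists>F. F \<subseteq> R \<and> finite F \<and> card F = q \<and> 0 \<in> F \<and> 1 \<in> F \<and>
     (\<forall>x\<in>F. \<forall>y\<in>F. x + y \<in> F \<and> x - y \<in> F \<and> x * y \<in> F) \<and>
     (\<forall>x\<in>F. x \<noteq> 0 \<longrightarrow> inverse x \<in> F))"

definition frac_field :: "'a::field set \<Rightarrow> 'a set" where
  "frac_field R = {a / b | a b. a \<in> R \<and> b \<in> R \<and> b \<noteq> 0}"

text \<open>x is separable algebraic over K: a root of a nonzero separable polynomial
  with coefficients in K (i.e. x lies in a separable closure of K).\<close>
definition separable_over :: "'a::field set \<Rightarrow> 'a \<Rightarrow> bool" where
  "separable_over K x \<longleftrightarrow> (\<exists>p. p \<noteq> 0 \<and> (\<forall>i. coeff p i \<in> K) \<and> poly p x = 0 \<and>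
       coprime p (pderiv p))"

definition integral_over :: "'a::field set \<Rightarrow> 'a \<Rightarrow> bool" where
  "integral_over R x \<longleftrightarrow> (\<exists>p. lead_coeff p = 1 \<and> (\<forall>i. coeff p i \<in> R) \<and> poly p x = 0)"

definition GL_over :: "nat \<Rightarrow> 'a::field set \<Rightarrow> 'a mat set" where
  "GL_over n R = {A. A \<in> carrier_mat n n \<and> (\<forall>i<n. \<forall>j<n. A $$ (i,j) \<in> R) \<and>
     (\<exists>B \<in> carrier_mat n n. (\<forall>i<n. \<forall>j<n. B $$ (i,j) \<in> R) \<and>
        A * B = 1\<^sub>m n \<and> B * A = 1\<^sub>m n)}"

end

theory Submission
  imports Defs "Jordan_Normal_Form.Determinant" "Jordan_Normal_Form.Char_Poly"
begin

text \<open>Inverting \<open>A\<close> over \<open>R\<close> turns \<open>A X\<^sup>(\<^sup>q\<^sup>) = X\<close> into \<open>X\<^sup>(\<^sup>q\<^sup>) = B X\<close> with \<open>B\<close> over \<open>R\<close>: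
  every \<open>x\<^sub>j\<^sup>q\<close> is an \<open>R\<close>-linear combination of the \<open>x\<^sub>l\<close>. Hence every monomial in the
  coordinates reduces to an \<open>R\<close>-combination of the finitely many monomials with all
  exponents below \<open>q\<close>, so \<open>R[X]\<close> is a finitely generated \<open>R\<close>-module containing \<open>1\<close>.
  By the determinant trick each coordinate is then an eigenvalue of a matrix over \<open>R\<close>,
  i.e. a root of its monic characteristic polynomial.\<close>

definition subring_closed :: "'a::comm_ring_1 set \<Rightarrow> bool" where
  "subring_closed R \<longleftrightarrow> 0 \<in> R \<and> 1 \<in> R \<and>
     (\<forall>x\<in>R. \<forall>y\<in>R. x + y \<in> R \<and> x - y \<in> R \<and> x * y \<in> R)"

lemma subring_of_imp_subring_closed: "subring_of R \<Longrightarrow> subring_closed R"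
  by (simp add: subring_of_def subring_closed_def)

lemma subring_closed_uminus: "subring_closed R \<Longrightarrow> x \<in> R \<Longrightarrow> - x \<in> R"
  unfolding subring_closed_def by (metis diff_0)

lemma subring_closed_sum:
  assumes "subring_closed R" "\<And>i. i \<in> I \<Longrightarrow> f i \<in> R"
  shows "sum f I \<in> R"
  using assms(2) by (induction I rule: infinite_finite_induct)
    (use assms(1) in \<open>auto simp: subring_closed_def\<close>)

lemma subring_closed_prod:
  assumes "subring_closed R" "\<And>i. i \<in> I \<Longrightarrow> f i \<in> R"
  shows "prod f I \<in> R"
  using assms(2) by (induction I rule: infinite_finite_induct)
    (use assms(1) in \<open>auto simp: subring_closed_def\<close>)

definition polys_over :: "'a::comm_ring_1 set \<Rightarrow> 'a poly set" where
  "polys_over R = {p. \<forall>i. coeff p i \<in> R}"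

lemma subring_closed_polys_over:
  assumes R: "subring_closed R"
  shows "subring_closed (polys_over R)"
proof -
  have "coeff (p * p') i \<in> R" if "p \<in> polys_over R" "p' \<in> polys_over R" for p p' i
    unfolding coeff_mult
    by (rule subring_closed_sum[OF R]) (use that R in \<open>auto simp: polys_over_def subring_closed_def\<close>)
  then show ?thesis
    using R by (auto simp: subring_closed_def polys_over_def coeff_1)
qed

lemma det_in_subring:
  assumes S: "subring_closed S" and M: "M \<in> carrier_mat n n"
    and entries: "\<And>i j. i < n \<Longrightarrow> j < n \<Longrightarrow> M $$ (i,j) \<in> S"
  shows "det M \<in> S"
proof -
  have "signof p \<in> S" for p :: "nat \<Rightarrow> nat"
    using S subring_closed_uminus[OF S] by (cases p rule: sign_cases) (auto simp: subring_closed_def)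
  moreover have "(\<Prod>i = 0..<n. M $$ (i, p i)) \<in> S" if "p permutes {0..<n}" for p
    using entries that by (auto intro!: subring_closed_prod[OF S] simp: permutes_def)
  ultimately show ?thesis
    using M S unfolding det_def by (auto intro!: subring_closed_sum[OF S] simp: subring_closed_def)
qed

lemma char_poly_in_polys_over:
  assumes R: "subring_closed R" and C: "C \<in> carrier_mat n n"
    and entries: "\<And>i j. i < n \<Longrightarrow> j < n \<Longrightarrow> C $$ (i,j) \<in> R"
  shows "char_poly C \<in> polys_over R"
  unfolding char_poly_def
proof (rule det_in_subring[OF subring_closed_polys_over[OF R]])
  show "char_poly_matrix C \<in> carrier_mat n n"
    using C by simp
  show "char_poly_matrix C $$ (i, j) \<in> polys_over R" if "i < n" "j < n" for i j
    using that C entries R subring_closed_uminus[OF R]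
    by (auto simp: char_poly_matrix_def polys_over_def subring_closed_def coeff_pCons split: nat.splits)
qed

lemma integral_over_if_eigenvalue:
  assumes R: "subring_closed R" and C: "C \<in> carrier_mat n n"
    and entries: "\<And>i j. i < n \<Longrightarrow> j < n \<Longrightarrow> C $$ (i,j) \<in> R"
    and "eigenvalue C x"
  shows "integral_over R x"
proof -
  have "poly (char_poly C) x = 0"
    using eigenvalue_root_char_poly[OF C] \<open>eigenvalue C x\<close> by simp
  moreover have "lead_coeff (char_poly C) = 1"
    using degree_monic_char_poly[OF C] by simp
  moreover have "char_poly C \<in> polys_over R"
    by (rule char_poly_in_polys_over[OF R C entries])
  ultimately show ?thesis
    unfolding integral_over_def polys_over_def by blast
qed

definition span_over :: "'a::comm_ring_1 set \<Rightarrow> 'b set \<Rightarrow> ('b \<Rightarrow> 'a) \<Rightarrow> 'a set" where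
  "span_over R E g = {\<Sum>k\<in>E. c k * g k | c. \<forall>k\<in>E. c k \<in> R}"

lemma span_over_zero:
  assumes "subring_closed R"
  shows "0 \<in> span_over R E g"
  using assms unfolding span_over_def subring_closed_def
  by (intro CollectI exI[of _ "\<lambda>_. 0"]) auto

lemma span_over_add:
  assumes R: "subring_closed R" and "a \<in> span_over R E g" "b \<in> span_over R E g"
  shows "a + b \<in> span_over R E g"
proof -
  obtain c d where "\<forall>k\<in>E. c k \<in> R" "a = (\<Sum>k\<in>E. c k * g k)"
    and "\<forall>k\<in>E. d k \<in> R" "b = (\<Sum>k\<in>E. d k * g k)"
    using assms(2,3) unfolding span_over_def by blast
  then show ?thesis
    using R unfolding span_over_def subring_closed_def
    by (intro CollectI exI[of _ "\<lambda>k. c k + d k"]) (auto simp: sum.distrib distrib_right)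
qed

lemma span_over_mult_left:
  assumes R: "subring_closed R" and "r \<in> R" "a \<in> span_over R E g"
  shows "r * a \<in> span_over R E g"
proof -
  obtain c where "\<forall>k\<in>E. c k \<in> R" "a = (\<Sum>k\<in>E. c k * g k)"
    using assms(3) unfolding span_over_def by blast
  then show ?thesis
    using R \<open>r \<in> R\<close> unfolding span_over_def subring_closed_def
    by (intro CollectI exI[of _ "\<lambda>k. r * c k"]) (auto simp: sum_distrib_left mult.assoc)
qed

lemma span_over_sum:
  assumes "subring_closed R" "\<And>i. i \<in> I \<Longrightarrow> f i \<in> span_over R E g"
  shows "sum f I \<in> span_over R E g"
  using assms(2) by (induction I rule: infinite_finite_induct)
    (auto intro: span_over_zero span_over_add assms(1))

lemma span_over_generator:
  assumes R: "subring_closed R" and "finite E" "k \<in> E"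
  shows "g k \<in> span_over R E g"
proof -
  have "(\<Sum>l\<in>E. (if l = k then 1 else 0) * g l) = (\<Sum>l\<in>E. if l = k then g l else 0)"
    by (rule sum.cong) auto
  then have "g k = (\<Sum>l\<in>E. (if l = k then 1 else 0) * g l)"
    using assms(2,3) by simp
  then show ?thesis
    using R unfolding span_over_def subring_closed_def
    by (intro CollectI exI[of _ "\<lambda>l. if l = k then 1 else 0"]) auto
qed

text \<open>The determinant trick: \<open>x\<close> acts on the finitely generated module by a matrix over
  \<open>R\<close> having the (nonzero) vector of generators as eigenvector.\<close>

lemma integral_over_if_span_mult_closed:
  fixes x :: "'a::field"
  assumes R: "subring_closed R" and E: "finite E" and k0: "k0 \<in> E" "g k0 \<noteq> 0"
    and closed: "\<forall>k\<in>E. x * g k \<in> span_over R E g"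
  shows "integral_over R x"
proof -
  obtain xs where xs: "distinct xs" "set xs = E"
    using finite_distinct_list[OF E] by blast
  define N where "N = length xs"
  have reindex: "(\<Sum>k\<in>E. f k) = (\<Sum>a<N. f (xs ! a))" for f :: "_ \<Rightarrow> 'a"
    using sum.reindex_bij_betw[OF bij_betw_nth[OF xs(1) refl xs(2)[symmetric]], of f] by (simp add: N_def)
  have "\<forall>k\<in>E. \<exists>c. (\<forall>l\<in>E. c l \<in> R) \<and> x * g k = (\<Sum>l\<in>E. c l * g l)"
    using closed unfolding span_over_def by blast
  then obtain c where c: "\<And>k. k \<in> E \<Longrightarrow> (\<forall>l\<in>E. c k l \<in> R) \<and> x * g k = (\<Sum>l\<in>E. c k l * g l)"
    by (metis bchoice)
  define C where "C = mat N N (\<lambda>(a, b). c (xs ! a) (xs ! b))"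
  define v where "v = vec N (\<lambda>a. g (xs ! a))"
  have C: "C \<in> carrier_mat N N"
    by (simp add: C_def)
  have in_E: "a < N \<Longrightarrow> xs ! a \<in> E" for a
    using xs(2) by (auto simp: N_def)
  have "C *\<^sub>v v = x \<cdot>\<^sub>v v"
  proof (rule eq_vecI)
    fix a assume "a < dim_vec (x \<cdot>\<^sub>v v)"
    then have a: "a < N" by (simp add: v_def)
    have "(C *\<^sub>v v) $ a = (\<Sum>b<N. c (xs ! a) (xs ! b) * g (xs ! b))"
      using a by (simp add: C_def v_def scalar_prod_def lessThan_atLeast0)
    also have "\<dots> = x * g (xs ! a)"
      using c[OF in_E[OF a]] reindex by simp
    finally show "(C *\<^sub>v v) $ a = (x \<cdot>\<^sub>v v) $ a"
      using a by (simp add: v_def)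
  qed (simp add: C_def v_def)
  moreover have "v \<noteq> 0\<^sub>v N"
  proof
    obtain a0 where "a0 < N" "xs ! a0 = k0"
      using k0(1) xs(2) by (auto simp: N_def in_set_conv_nth)
    moreover assume "v = 0\<^sub>v N"
    ultimately show False
      using k0(2) by (metis index_vec index_zero_vec(1) v_def)
  qed
  ultimately have "eigenvector C v x"
    using C unfolding eigenvector_def by (simp add: v_def)
  then have "eigenvalue C x"
    unfolding eigenvalue_def by blast
  moreover have "C $$ (a, b) \<in> R" if "a < N" "b < N" for a b
    using c in_E that by (simp add: C_def)
  ultimately show ?thesis
    using integral_over_if_eigenvalue[OF R C] by blast
qed

definition power_product :: "(nat \<Rightarrow> 'a::comm_ring_1) \<Rightarrow> nat \<Rightarrow> (nat \<Rightarrow> nat) \<Rightarrow> 'a" where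
  "power_product x n e = (\<Prod>i<n. x i ^ e i)"

lemma power_product_restrict: "power_product x n (restrict e {..<n}) = power_product x n e"
  unfolding power_product_def by (rule prod.cong) auto

lemma power_product_upd_add:
  assumes "j < n"
  shows "power_product x n (e(j := e j + d)) = x j ^ d * power_product x n e"
proof -
  have "(\<Prod>i\<in>{..<n}-{j}. x i ^ (e(j := e j + d)) i) = (\<Prod>i\<in>{..<n}-{j}. x i ^ e i)"
    by (rule prod.cong) auto
  then show ?thesis
    using assms unfolding power_product_def by (simp add: prod.remove[of "{..<n}" j] power_add mult_ac)
qed

lemma sum_upd_add:
  fixes e :: "nat \<Rightarrow> nat"
  assumes "j < n"
  shows "(\<Sum>i<n. (e(j := e j + d)) i) = d + (\<Sum>i<n. e i)"
proof -
  have "(\<Sum>i\<in>{..<n}-{j}. (e(j := e j + d)) i) = (\<Sum>i\<in>{..<n}-{j}. e i)"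
    by (rule sum.cong) auto
  then show ?thesis
    using assms by (simp add: sum.remove[of "{..<n}" j])
qed

text \<open>Replacing a factor \<open>x\<^sub>j\<^sup>q\<close> by \<open>\<Sum>\<^sub>l b\<^sub>j\<^sub>l x\<^sub>l\<close> lowers the total degree by \<open>q - 1 > 0\<close>.\<close>

lemma power_product_in_span_reduced:
  assumes R: "subring_closed R" and q: "1 < q"
    and rel: "\<forall>j<n. x j ^ q = (\<Sum>l<n. b j l * x l)"
    and b: "\<forall>j<n. \<forall>l<n. b j l \<in> R"
  shows "power_product x n e \<in> span_over R (PiE {..<n} (\<lambda>_. {..<q})) (power_product x n)"
    (is "_ \<in> ?S")
proof (induction "\<Sum>i<n. e i" arbitrary: e rule: less_induct)
  case less
  show ?case
  proof (cases "\<forall>i<n. e i < q")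
    case True
    then have "restrict e {..<n} \<in> PiE {..<n} (\<lambda>_. {..<q})"
      by auto
    then show ?thesis
      using span_over_generator[OF R] power_product_restrict by (metis finite_PiE finite_lessThan)
  next
    case False
    then obtain j where j: "j < n" "q \<le> e j"
      by (auto simp: not_less)
    define e' where "e' = e(j := e j - q)"
    have e: "e = e'(j := e' j + q)"
      using j(2) by (auto simp: e'_def)
    have lowered: "x l * power_product x n e' \<in> ?S" if l: "l < n" for l
    proof -
      have "(\<Sum>i<n. (e'(l := e' l + 1)) i) < (\<Sum>i<n. e i)"
        using sum_upd_add[OF l, of e' 1] sum_upd_add[OF j(1), of e' q] q e by simp
      then show ?thesis
        using less[of "e'(l := e' l + 1)"] power_product_upd_add[OF l, of x e' 1] by simp
    qed
    have "power_product x n e = (\<Sum>l<n. b j l * (x l * power_product x n e'))"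
      using power_product_upd_add[OF j(1), of x e' q] rel j(1) e
      by (simp add: sum_distrib_right mult.assoc)
    also have "\<dots> \<in> ?S"
      by (rule span_over_sum[OF R], rule span_over_mult_left[OF R]) (use b j(1) lowered in auto)
    finally show ?thesis .
  qed
qed

lemma integral_over_if_powers_linear:
  fixes x :: "nat \<Rightarrow> 'a::field"
  assumes R: "subring_closed R" and q: "1 < q"
    and rel: "\<forall>j<n. x j ^ q = (\<Sum>l<n. b j l * x l)"
    and b: "\<forall>j<n. \<forall>l<n. b j l \<in> R"
    and "i < n"
  shows "integral_over R (x i)"
proof -
  define E where "E = PiE {..<n} (\<lambda>_. {..<q})"
  define zero where "zero = restrict (\<lambda>_. 0::nat) {..<n}"
  have "finite E" "zero \<in> E"
    using q by (auto simp: E_def zero_def finite_PiE)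
  moreover have "power_product x n zero \<noteq> 0"
    by (simp add: zero_def power_product_restrict) (simp add: power_product_def)
  moreover have "\<forall>k\<in>E. x i * power_product x n k \<in> span_over R E (power_product x n)"
    using power_product_in_span_reduced[OF R q rel b, of "k(i := k i + 1)" for k]
      power_product_upd_add[OF \<open>i < n\<close>, of x _ 1]
    by (simp add: E_def)
  ultimately show ?thesis
    by (rule integral_over_if_span_mult_closed[OF R])
qed

lemma powers_linear_if_GL_fixed:
  assumes "A \<in> GL_over n R" and X: "X \<in> carrier_vec n"
    and fixed: "A *\<^sub>v map_vec (\<lambda>x. x ^ q) X = X"
  obtains B where "\<forall>j<n. \<forall>l<n. B $$ (j,l) \<in> R"
    and "\<forall>j<n. X $ j ^ q = (\<Sum>l<n. B $$ (j,l) * X $ l)"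
proof -
  obtain B where A: "A \<in> carrier_mat n n" and B: "B \<in> carrier_mat n n"
    and B_entries: "\<forall>j<n. \<forall>l<n. B $$ (j,l) \<in> R" and BA: "B * A = 1\<^sub>m n"
    using assms(1) unfolding GL_over_def by blast
  have Xq: "map_vec (\<lambda>x. x ^ q) X \<in> carrier_vec n"
    using X by simp
  have "(B * A) *\<^sub>v map_vec (\<lambda>x. x ^ q) X = B *\<^sub>v X"
    unfolding assoc_mult_mat_vec[OF B A Xq] fixed ..
  then have Xq_eq: "map_vec (\<lambda>x. x ^ q) X = B *\<^sub>v X"
    unfolding BA using Xq by simp
  have "X $ j ^ q = (\<Sum>l<n. B $$ (j,l) * X $ l)" if j: "j < n" for j
  proof -
    have "X $ j ^ q = (B *\<^sub>v X) $ j"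
      using Xq_eq j X by (metis carrier_vecD index_map_vec(1))
    also have "\<dots> = (\<Sum>l<n. B $$ (j,l) * X $ l)"
      using j B X by (simp add: scalar_prod_def lessThan_atLeast0)
    finally show ?thesis .
  qed
  then show ?thesis
    using B_entries that by blast
qed

lemma card_ge_2_if_contains_Fq:
  assumes "contains_Fq R q"
  shows "2 \<le> q"
proof -
  obtain F :: "'a set" where F: "finite F" "card F = q" "0 \<in> F" "1 \<in> F"
    using assms unfolding contains_Fq_def by blast
  then have "card {0::'a, 1} \<le> q"
    by (metis card_mono empty_subsetI insert_subset)
  then show ?thesis
    by simp
qed

theorem proposition2p12:
  fixes R :: "'a::field set" and q n :: nat and A :: "'a mat" and X :: "'a vec"
  assumes "noetherian_subring R"
    and "contains_Fq R q"
    and "A \<in> GL_over n R"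
    and "X \<in> carrier_vec n"
    and "\<forall>i<n. separable_over (frac_field R) (X $ i)"
    and "A *\<^sub>v map_vec (\<lambda>x. x ^ q) X = X"
  shows "\<forall>i<n. integral_over R (X $ i)"
proof -
  have R: "subring_closed R"
    using assms(1) by (simp add: noetherian_subring_def subring_of_imp_subring_closed)
  have q: "1 < q"
    using card_ge_2_if_contains_Fq[OF assms(2)] by simp
  obtain B where "\<forall>j<n. \<forall>l<n. B $$ (j,l) \<in> R"
    and "\<forall>j<n. X $ j ^ q = (\<Sum>l<n. B $$ (j,l) * X $ l)"
    using powers_linear_if_GL_fixed[OF assms(3,4,6)] .
  then show ?thesis
    using integral_over_if_powers_linear[OF R q, of n "\<lambda>i. X $ i" "\<lambda>j l. B $$ (j,l)"] by blast
qed

end
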